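(* (i) For every $k\ge2$, $\alpha\in(1,2)$, $p\in(0,1)$ there exists $C^{\alpha,p}_{5,k}>0$ such that for all $n\in\mathbb{N}$ and $t\in\mathbb{R}$, $\big|\frac{\mathrm{d}R^{\alpha,p}_{n,1,k}(t)}{\mathrm{d}t}\big|\le C^{\alpha,p}_{5,k}|t|^{k-1}/n^{(k-\alpha)/\alpha}$. (ii) Let $\alpha\in(1,2)$, $p\in(0,1)$, and let $C_2>0$ be a constant such that $|x_n^{\alpha,p}(t)|/n\le\frac12$ for all $n\in\mathbb{N}$ and $|t|\le C_2n^{1/\alpha}$. Then there exists $C_5^{\alpha,p}>0$ such that for all $n\in\mathbb{N}$ and $|t|\le C_2n^{1/\alpha}$, $\big|\frac{\mathrm{d}x_n^{\alpha,p}(t)}{\mathrm{d}t}\big|\le C_5^{\alpha,p}n^{(\alpha-1)/\alpha}$.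
   Context: Let $p\in(0,1)$, $q=1-p$, $r=1/q$, $\alpha\in(1,2)$. Let $\mathbf{f}_{\alpha,p}(t)=\sum_{k\ge1}e^{\mathrm{i}tr^{k/\alpha}}q^{k-1}p$ and $x_n^{\alpha,p}(t)=n(\mathbf{f}_{\alpha,p}(t/n^{1/\alpha})-1)$ (differentiable since $\alpha>1$; a constant $C_2$ as in (ii) exists). Let $\gamma_n=n/r^{\lceil\log_rn\rceil}$ and for $k\ge2$ \[R^{\alpha,p}_{n,1,k}(t)=-\sum_{m=\lceil\log_rn\rceil}^\infty\Big(\exp\Big\{\frac{\mathrm{i}t}{r^{m/\alpha}\gamma_n^{1/\alpha}}\Big\}-\sum_{j=0}^{k-1}\frac{(\mathrm{i}t)^j}{j!\,r^{jm/\alpha}\gamma_n^{j/\alpha}}\Big)\frac{p\gamma_n}{q}r^m,\] which is differentiable in $t$. *)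

theory Defs
  imports "HOL-Analysis.Analysis"
begin

text \<open>q = 1 - p, r = 1/q.\<close>

definition f_ap :: "real \<Rightarrow> real \<Rightarrow> real \<Rightarrow> complex" where
  "f_ap \<alpha> p t = (\<Sum>k. exp (\<i> * of_real (t * (1 / (1 - p)) powr (real (Suc k) / \<alpha>)))
                      * of_real ((1 - p) ^ k * p))"

definition x_ap :: "real \<Rightarrow> real \<Rightarrow> nat \<Rightarrow> real \<Rightarrow> complex" where
  "x_ap \<alpha> p n t = of_nat n * (f_ap \<alpha> p (t / real n powr (1 / \<alpha>)) - 1)"

text \<open>The index \<lceil>log_r n\<rceil> (nonnegative for n \<ge> 1).\<close>
definition M_p :: "real \<Rightarrow> nat \<Rightarrow> nat" where
  "M_p p n = nat \<lceil>log (1 / (1 - p)) (real n)\<rceil>"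

definition gamma_p :: "real \<Rightarrow> nat \<Rightarrow> real" where
  "gamma_p p n = real n / (1 / (1 - p)) ^ M_p p n"

definition R_ap :: "real \<Rightarrow> real \<Rightarrow> nat \<Rightarrow> nat \<Rightarrow> real \<Rightarrow> complex" where
  "R_ap \<alpha> p n k t = - (\<Sum>j. (let m = j + M_p p n;
        r = 1 / (1 - p);
        s = r powr (real m / \<alpha>) * gamma_p p n powr (1 / \<alpha>) in
        (exp (\<i> * of_real (t / s))
          - (\<Sum>i<k. (\<i> * of_real t) ^ i / (of_real (fact i) * of_real (s ^ i))))
        * of_real (p * gamma_p p n / (1 - p) * r ^ m)))"

end

theory Submission
  imports Defs "HOL-Probability.Characteristic_Functions"
begin

text \<open>
  Both functions are series that may be differentiated termwise (Weierstrass M-test).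
  The j-th term of R is a weight w_j times the order-k Taylor remainder of e^{it/s_j}, whose
  derivative is w_j/s_j times the order-(k-1) remainder, of modulus at most
  |t|^{k-1}/(k-1)! * w_j/s_j^k. Since k > \<alpha> these ratios form a geometric series in j, and
  because \<gamma>_n r^{\<lceil>log_r n\<rceil>} = n its sum is a constant multiple of n^{1-k/\<alpha>}.
  For x_n, the derivative of f is bounded by the first moment \<Sum> r^{k/\<alpha>} q^{k-1} p, which is
  finite because \<alpha> > 1; the inner scaling t/n^{1/\<alpha>} then contributes the factor n^{1-1/\<alpha>}.
\<close>

lemma has_vector_derivative_suminf:
  fixes f d :: "nat \<Rightarrow> real \<Rightarrow> 'b::banach"
  assumes S: "open S" "convex S" "x \<in> S"
    and deriv: "\<And>n y. y \<in> S \<Longrightarrow> (f n has_vector_derivative d n y) (at y)"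
    and bound: "\<And>n y. y \<in> S \<Longrightarrow> norm (d n y) \<le> B n" and "summable B"
    and "summable (\<lambda>n. f n x)"
  shows "((\<lambda>y. \<Sum>n. f n y) has_vector_derivative (\<Sum>n. d n x)) (at x)"
proof -
  have unif: "uniform_limit S (\<lambda>n y. \<Sum>i<n. d i y) (\<lambda>y. \<Sum>i. d i y) sequentially"
    by (rule Weierstrass_m_test[OF bound \<open>summable B\<close>])
  have "\<exists>g. \<forall>y\<in>S. (\<lambda>n. f n y) sums g y \<and>
      (g has_derivative (\<lambda>h. h *\<^sub>R (\<Sum>i. d i y))) (at y within S)"
  proof (rule has_derivative_series[OF S(2), where f' = "\<lambda>n y h. h *\<^sub>R d n y"])
    show "(f n has_derivative (\<lambda>h. h *\<^sub>R d n y)) (at y within S)" if "y \<in> S" for n y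
      using deriv[OF that] by (simp add: has_vector_derivative_def has_derivative_at_withinI)
    show "(\<lambda>n. f n x) sums (\<Sum>n. f n x)"
      using \<open>summable (\<lambda>n. f n x)\<close> by (simp add: summable_sums)
    fix e :: real
    assume "e > 0"
    from uniform_limitD[OF unif this]
    show "\<forall>\<^sub>F n in sequentially. \<forall>y\<in>S. \<forall>h.
        norm ((\<Sum>i<n. h *\<^sub>R d i y) - h *\<^sub>R (\<Sum>i. d i y)) \<le> e * norm h"
    proof (rule eventually_mono, intro ballI allI)
      fix n y h
      assume "\<forall>y\<in>S. dist (\<Sum>i<n. d i y) (\<Sum>i. d i y) < e" and "y \<in> S"
      then have "\<bar>h\<bar> * norm ((\<Sum>i<n. d i y) - (\<Sum>i. d i y)) \<le> \<bar>h\<bar> * e"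
        by (intro mult_left_mono) (auto simp: dist_norm)
      then show "norm ((\<Sum>i<n. h *\<^sub>R d i y) - h *\<^sub>R (\<Sum>i. d i y)) \<le> e * norm h"
        by (simp add: scaleR_sum_right[symmetric] scaleR_diff_right[symmetric] mult.commute)
    qed
  qed (use S in auto)
  then obtain g where sums: "\<And>y. y \<in> S \<Longrightarrow> (\<lambda>n. f n y) sums g y"
    and g: "(g has_derivative (\<lambda>h. h *\<^sub>R (\<Sum>i. d i x))) (at x within S)"
    using S(3) by blast
  from g have "(g has_derivative (\<lambda>h. h *\<^sub>R (\<Sum>i. d i x))) (at x)"
    using at_within_open[OF S(3,1)] by simp
  then have "((\<lambda>y. \<Sum>n. f n y) has_derivative (\<lambda>h. h *\<^sub>R (\<Sum>i. d i x))) (at x)"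
    by (rule has_derivative_transform_within_open[OF _ S(1,3)]) (use sums sums_unique in auto)
  then show ?thesis
    by (simp add: has_vector_derivative_def)
qed

definition iexp_taylor_rem :: "nat \<Rightarrow> real \<Rightarrow> complex" where
  "iexp_taylor_rem k x = iexp x - (\<Sum>i<k. (\<i> * of_real x) ^ i / fact i)"

lemma norm_iexp_taylor_rem_le: "norm (iexp_taylor_rem k x) \<le> \<bar>x\<bar> ^ k / fact k"
proof (cases k)
  case 0
  then show ?thesis by (simp add: iexp_taylor_rem_def norm_exp_i_times)
next
  case (Suc m)
  then show ?thesis
    using iexp_approx1[of x m] by (simp add: iexp_taylor_rem_def lessThan_Suc_atMost)
qed

lemma iexp_taylor_rem_has_vector_derivative:
  "(iexp_taylor_rem (Suc k) has_vector_derivative \<i> * iexp_taylor_rem k x) (at x)"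
proof (induction k)
  case 0
  show ?case
    unfolding iexp_taylor_rem_def by (auto intro!: derivative_eq_intros)
next
  case (Suc k)
  have "((\<lambda>z::complex. (\<i> * z) ^ Suc k / fact (Suc k)) has_field_derivative
      \<i> * ((\<i> * of_real x) ^ k / fact k)) (at (of_real x))"
  proof -
    have "((\<lambda>z::complex. (\<i> * z) ^ Suc k / fact (Suc k)) has_field_derivative
        of_nat (Suc k) * (\<i> * (\<i> * of_real x) ^ (Suc k - Suc 0)) / fact (Suc k)) (at (of_real x))"
      by (rule DERIV_cdivide, rule DERIV_power, rule DERIV_cmult_Id)
    then show ?thesis by (simp add: fact_Suc field_simps del: of_nat_Suc)
  qed
  from has_vector_derivative_real_field[OF this]
  have "((\<lambda>x. (\<i> * of_real x) ^ Suc k / fact (Suc k)) has_vector_derivative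
      \<i> * ((\<i> * of_real x) ^ k / fact k)) (at x)" .
  from has_vector_derivative_diff[OF Suc.IH this]
  show ?case
    by (simp add: iexp_taylor_rem_def algebra_simps)
qed

lemma norm_iexp_taylor_rem_scaled_le:
  assumes "s > 0" "c \<ge> 0"
  shows "norm (iexp_taylor_rem k (t / s) * of_real c) \<le> \<bar>t\<bar> ^ k / fact k * (c / s ^ k)"
proof -
  have "norm (iexp_taylor_rem k (t / s) * of_real c) \<le> \<bar>t / s\<bar> ^ k / fact k * c"
    unfolding norm_mult norm_of_real abs_of_nonneg[OF assms(2)] using assms(2)
    by (intro mult_right_mono norm_iexp_taylor_rem_le)
  with assms show ?thesis by (simp add: power_divide mult.commute)
qed

lemma norm_iexp_taylor_rem_deriv_term_le:
  assumes "s > 0" "w \<ge> 0"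
  shows "norm (\<i> * iexp_taylor_rem k (t / s) * of_real (w / s))
    \<le> \<bar>t\<bar> ^ k / fact k * (w / s ^ Suc k)"
proof -
  have "norm (\<i> * iexp_taylor_rem k (t / s) * of_real (w / s))
      = norm (iexp_taylor_rem k (t / s) * of_real (w / s))"
    by (simp only: mult.assoc norm_mult norm_ii mult_1)
  also have "\<dots> \<le> \<bar>t\<bar> ^ k / fact k * (w / s / s ^ k)"
    using assms by (intro norm_iexp_taylor_rem_scaled_le) auto
  also have "w / s / s ^ k = w / s ^ Suc k"
    by (simp add: field_simps)
  finally show ?thesis .
qed

lemma has_vector_derivative_suminf_iexp_taylor_rem:
  fixes s w :: "nat \<Rightarrow> real"
  assumes s: "\<And>j. s j > 0" and w: "\<And>j. w j \<ge> 0"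
    and summable: "summable (\<lambda>j. w j / s j ^ Suc k)"
  shows "((\<lambda>t. \<Sum>j. iexp_taylor_rem (Suc k) (t / s j) * of_real (w j)) has_vector_derivative
           (\<Sum>j. \<i> * iexp_taylor_rem k (t / s j) * of_real (w j / s j))) (at t)"
proof (rule has_vector_derivative_suminf)
  fix j and y :: real
  have "((\<lambda>y. y / s j) has_real_derivative 1 / s j) (at y)"
    using s[of j] by (auto intro!: derivative_eq_intros)
  from vector_diff_chain_at[OF this[unfolded has_real_derivative_iff_has_vector_derivative]
      iexp_taylor_rem_has_vector_derivative]
  show "((\<lambda>y. iexp_taylor_rem (Suc k) (y / s j) * of_real (w j)) has_vector_derivative
          \<i> * iexp_taylor_rem k (y / s j) * of_real (w j / s j)) (at y)"
    using s[of j] by (auto intro!: derivative_eq_intros simp: o_def scaleR_conv_of_real field_simps)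
next
  fix j and y :: real
  assume "y \<in> ball t 1"
  then have "\<bar>y\<bar> ^ k \<le> (\<bar>t\<bar> + 1) ^ k"
    by (intro power_mono) (auto simp: dist_real_def)
  then have "\<bar>y\<bar> ^ k / fact k * (w j / s j ^ Suc k)
      \<le> (\<bar>t\<bar> + 1) ^ k / fact k * (w j / s j ^ Suc k)"
    using s[of j] w[of j] by (intro mult_right_mono divide_right_mono) auto
  with norm_iexp_taylor_rem_deriv_term_le[OF s[of j] w[of j], of k y]
  show "norm (\<i> * iexp_taylor_rem k (y / s j) * of_real (w j / s j))
      \<le> (\<bar>t\<bar> + 1) ^ k / fact k * (w j / s j ^ Suc k)"
    by linarith
next
  show "summable (\<lambda>j. iexp_taylor_rem (Suc k) (t / s j) * of_real (w j))"
  proof (rule summable_norm_cancel, rule summable_comparison_test)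
    have "norm (iexp_taylor_rem (Suc k) (t / s j) * of_real (w j))
        \<le> \<bar>t\<bar> ^ Suc k / fact (Suc k) * (w j / s j ^ Suc k)" for j
      by (rule norm_iexp_taylor_rem_scaled_le[OF s w])
    then show "\<exists>N. \<forall>j\<ge>N. norm (norm (iexp_taylor_rem (Suc k) (t / s j) * of_real (w j)))
        \<le> \<bar>t\<bar> ^ Suc k / fact (Suc k) * (w j / s j ^ Suc k)"
      by simp
  qed (intro summable_mult summable)
qed (use summable_mult[OF summable, of "(\<bar>t\<bar> + 1) ^ k / fact k"] in auto)

lemma norm_suminf_iexp_taylor_rem_deriv_le:
  fixes s w :: "nat \<Rightarrow> real"
  assumes s: "\<And>j. s j > 0" and w: "\<And>j. w j \<ge> 0"
    and summable: "summable (\<lambda>j. w j / s j ^ Suc k)"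
  shows "norm (\<Sum>j. \<i> * iexp_taylor_rem k (t / s j) * of_real (w j / s j))
      \<le> \<bar>t\<bar> ^ k / fact k * (\<Sum>j. w j / s j ^ Suc k)"
proof -
  have "norm (\<Sum>j. \<i> * iexp_taylor_rem k (t / s j) * of_real (w j / s j))
      \<le> (\<Sum>j. \<bar>t\<bar> ^ k / fact k * (w j / s j ^ Suc k))"
    by (intro norm_suminf_le norm_iexp_taylor_rem_deriv_term_le s w summable_mult summable)
  also have "\<dots> = \<bar>t\<bar> ^ k / fact k * (\<Sum>j. w j / s j ^ Suc k)"
    by (rule suminf_mult[OF summable])
  finally show ?thesis .
qed

lemma has_vector_derivative_suminf_iexp:
  fixes a w :: "nat \<Rightarrow> real"
  assumes w: "\<And>k. w k \<ge> 0" and "summable w" and moment: "summable (\<lambda>k. \<bar>a k\<bar> * w k)"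
  shows "((\<lambda>u. \<Sum>k. iexp (u * a k) * of_real (w k)) has_vector_derivative
           (\<Sum>k. \<i> * of_real (a k) * iexp (u * a k) * of_real (w k))) (at u)"
proof (rule has_vector_derivative_suminf[where S = UNIV])
  fix k and y :: real
  have "((\<lambda>z. exp (\<i> * (z * of_real (a k))) * of_real (w k)) has_field_derivative
      \<i> * of_real (a k) * iexp (y * a k) * of_real (w k)) (at (of_real y))"
    by (auto intro!: derivative_eq_intros)
  from has_vector_derivative_real_field[OF this]
  show "((\<lambda>y. iexp (y * a k) * of_real (w k)) has_vector_derivative
      \<i> * of_real (a k) * iexp (y * a k) * of_real (w k)) (at y)"
    by simp
next
  fix k and y :: real
  show "norm (\<i> * of_real (a k) * iexp (y * a k) * of_real (w k)) \<le> \<bar>a k\<bar> * w k"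
    using w[of k] by (simp add: norm_mult)
next
  show "summable (\<lambda>k. iexp (u * a k) * of_real (w k))"
    by (rule summable_norm_cancel) (use w \<open>summable w\<close> in \<open>simp add: norm_mult\<close>)
qed (use moment in auto)

definition R_scale :: "real \<Rightarrow> real \<Rightarrow> nat \<Rightarrow> nat \<Rightarrow> real" where
  "R_scale \<alpha> p n j = (1 / (1 - p)) powr (real (j + M_p p n) / \<alpha>) * gamma_p p n powr (1 / \<alpha>)"

definition R_weight :: "real \<Rightarrow> nat \<Rightarrow> nat \<Rightarrow> real" where
  "R_weight p n j = p * gamma_p p n / (1 - p) * (1 / (1 - p)) ^ (j + M_p p n)"

lemma R_ap_eq_suminf_iexp_taylor_rem:
  "R_ap \<alpha> p n k
    = (\<lambda>t. - (\<Sum>j. iexp_taylor_rem k (t / R_scale \<alpha> p n j) * of_real (R_weight p n j)))"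
proof -
  have taylor_coeff: "(\<i> * of_real t) ^ i / (of_real (fact i) * of_real (s ^ i))
      = (\<i> * of_real (t / s)) ^ i / fact i" for t s :: real and i
    by (simp add: power_divide power_mult_distrib)
  show ?thesis
    unfolding R_ap_def Let_def taylor_coeff iexp_taylor_rem_def R_scale_def R_weight_def
    by (rule refl)
qed

lemma gamma_p_pos: "p < 1 \<Longrightarrow> n \<ge> 1 \<Longrightarrow> gamma_p p n > 0"
  by (simp add: gamma_p_def)

lemma gamma_p_mult_power_M_p: "p < 1 \<Longrightarrow> gamma_p p n * (1 / (1 - p)) ^ M_p p n = real n"
  by (simp add: gamma_p_def)

lemma R_scale_pos: "p < 1 \<Longrightarrow> n \<ge> 1 \<Longrightarrow> R_scale \<alpha> p n j > 0"
  using gamma_p_pos[of p n] by (simp add: R_scale_def)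

lemma R_weight_nonneg: "0 < p \<Longrightarrow> p < 1 \<Longrightarrow> R_weight p n j \<ge> 0"
  by (simp add: R_weight_def gamma_p_def)

lemma R_weight_div_R_scale_power:
  assumes p: "p < 1" and "\<alpha> > 0" and n: "n \<ge> 1"
  shows "R_weight p n j / R_scale \<alpha> p n j ^ k
    = p / (1 - p) * real n powr (1 - k / \<alpha>) * ((1 / (1 - p)) powr (1 - k / \<alpha>)) ^ j"
proof -
  define r where "r = 1 / (1 - p)"
  define g where "g = gamma_p p n"
  define M where "M = M_p p n"
  define e where "e = 1 - k / \<alpha>"
  have r: "r > 0" and g: "g > 0" using p n by (simp_all add: r_def g_def gamma_p_pos)
  have n_eq: "real n = g * r powr M"
    using gamma_p_mult_power_M_p[OF p, of n] r by (simp add: g_def M_def r_def powr_realpow)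
  have "R_scale \<alpha> p n j ^ k = r powr (k * (j + M) / \<alpha>) * g powr (k / \<alpha>)"
    using r g by (simp add: R_scale_def r_def[symmetric] g_def[symmetric] M_def[symmetric]
        power_mult_distrib powr_power)
  moreover have "R_weight p n j = p / (1 - p) * g * r powr real (j + M)"
    unfolding powr_realpow[OF r]
    by (simp add: R_weight_def r_def[symmetric] g_def[symmetric] M_def[symmetric])
  ultimately have "R_weight p n j / R_scale \<alpha> p n j ^ k
      = p / (1 - p) * (g / g powr (k / \<alpha>)) * (r powr (j + M) / r powr (k * (j + M) / \<alpha>))"
    by simp
  also have "g / g powr (k / \<alpha>) = g powr e"
    using g by (simp add: e_def powr_diff)
  also have "r powr (j + M) / r powr (k * (j + M) / \<alpha>) = (r powr M) powr e * (r powr e) ^ j"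
    using r by (simp add: e_def powr_diff[symmetric] powr_powr powr_power powr_add[symmetric]
        algebra_simps add_divide_distrib)
  finally show ?thesis
    using g r by (simp add: n_eq powr_mult e_def r_def)
qed

lemma R_weight_div_R_scale_power_sums:
  assumes p: "0 < p" "p < 1" and \<alpha>: "0 < \<alpha>" "\<alpha> < real k" and n: "n \<ge> 1"
  defines "\<rho> \<equiv> (1 / (1 - p)) powr (1 - k / \<alpha>)"
  shows "(\<lambda>j. R_weight p n j / R_scale \<alpha> p n j ^ k)
    sums (p / (1 - p) * real n powr (1 - k / \<alpha>) / (1 - \<rho>))"
proof -
  have "\<rho> < 1"
    unfolding \<rho>_def using p \<alpha> by (intro powr_less_one) (auto simp: field_simps)
  moreover have "\<rho> \<ge> 0" by (simp add: \<rho>_def)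
  ultimately have "(\<lambda>j. p / (1 - p) * real n powr (1 - k / \<alpha>) * \<rho> ^ j)
      sums (p / (1 - p) * real n powr (1 - k / \<alpha>) * (1 / (1 - \<rho>)))"
    by (intro sums_mult geometric_sums) auto
  then show ?thesis
    using R_weight_div_R_scale_power[OF p(2) \<alpha>(1) n] by (simp add: \<rho>_def)
qed

lemma norm_vector_derivative_R_ap_le:
  assumes p: "0 < p" "p < 1" and \<alpha>: "0 < \<alpha>" "\<alpha> < real k" and n: "n \<ge> 1"
  defines "\<rho> \<equiv> (1 / (1 - p)) powr (1 - k / \<alpha>)"
  shows "norm (vector_derivative (R_ap \<alpha> p n k) (at t))
    \<le> p / ((1 - p) * (1 - \<rho>) * fact (k - 1)) * \<bar>t\<bar> ^ (k - 1) / real n powr ((real k - \<alpha>) / \<alpha>)"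
proof -
  obtain k' where k: "k = Suc k'"
    using \<alpha> by (cases k) auto
  have s: "\<And>j. R_scale \<alpha> p n j > 0" and w: "\<And>j. R_weight p n j \<ge> 0"
    using p n by (simp_all add: R_scale_pos R_weight_nonneg)
  have sums: "(\<lambda>j. R_weight p n j / R_scale \<alpha> p n j ^ Suc k')
      sums (p / (1 - p) * real n powr (1 - k / \<alpha>) / (1 - \<rho>))"
    using R_weight_div_R_scale_power_sums[OF p \<alpha> n] by (simp add: k \<rho>_def)
  have "vector_derivative (R_ap \<alpha> p n k) (at t)
      = - (\<Sum>j. \<i> * iexp_taylor_rem k' (t / R_scale \<alpha> p n j)
              * of_real (R_weight p n j / R_scale \<alpha> p n j))"
    unfolding R_ap_eq_suminf_iexp_taylor_rem k
    by (intro vector_derivative_at has_vector_derivative_minus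
        has_vector_derivative_suminf_iexp_taylor_rem s w sums_summable[OF sums])
  then have "norm (vector_derivative (R_ap \<alpha> p n k) (at t))
      = norm (\<Sum>j. \<i> * iexp_taylor_rem k' (t / R_scale \<alpha> p n j)
              * of_real (R_weight p n j / R_scale \<alpha> p n j))"
    by (simp only: norm_minus_cancel)
  also have "\<dots> \<le> \<bar>t\<bar> ^ k' / fact k' * (\<Sum>j. R_weight p n j / R_scale \<alpha> p n j ^ Suc k')"
    by (rule norm_suminf_iexp_taylor_rem_deriv_le[OF s w sums_summable[OF sums]])
  also have "(\<Sum>j. R_weight p n j / R_scale \<alpha> p n j ^ Suc k')
      = p / (1 - p) * real n powr (1 - k / \<alpha>) / (1 - \<rho>)"
    by (rule sums_unique[OF sums, symmetric])
  also have "real n powr (1 - k / \<alpha>) = 1 / real n powr ((real k - \<alpha>) / \<alpha>)"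
  proof -
    have "1 - k / \<alpha> = - ((real k - \<alpha>) / \<alpha>)"
      using \<alpha> by (simp add: field_simps)
    then show ?thesis by (simp add: powr_minus_divide)
  qed
  finally show ?thesis
    by (simp add: k field_simps)
qed

lemma f_ap_moment_term_eq:
  assumes "p < 1"
  shows "(1 / (1 - p)) powr (Suc k / \<alpha>) * ((1 - p) ^ k * p)
    = (1 / (1 - p)) powr (1 / \<alpha>) * p * ((1 - p) powr (1 - 1 / \<alpha>)) ^ k"
proof -
  have "(1 / (1 - p)) powr (Suc k / \<alpha>)
      = (1 / (1 - p)) powr (1 / \<alpha>) * ((1 / (1 - p)) powr (1 / \<alpha>)) ^ k"
    using assms by (simp add: powr_realpow[symmetric] powr_powr powr_add[symmetric] add_divide_distrib)
  moreover have "(1 / (1 - p)) powr (1 / \<alpha>) * (1 - p) = (1 - p) powr (1 - 1 / \<alpha>)"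
    using assms by (simp add: powr_divide powr_diff)
  ultimately show ?thesis
    by (simp add: power_mult_distrib[symmetric] mult_ac)
qed

lemma summable_f_ap_moment:
  assumes "1 < \<alpha>" "0 < p" "p < 1"
  shows "summable (\<lambda>k. (1 / (1 - p)) powr (Suc k / \<alpha>) * ((1 - p) ^ k * p))"
proof -
  have "(1 - p) powr (1 - 1 / \<alpha>) < 1"
    using assms by (subst powr01_less_one) auto
  then show ?thesis
    unfolding f_ap_moment_term_eq[OF assms(3)]
    by (intro summable_mult summable_geometric) auto
qed

lemma f_ap_has_vector_derivative:
  assumes "1 < \<alpha>" "0 < p" "p < 1"
  obtains D where "(f_ap \<alpha> p has_vector_derivative D) (at u)"
    and "norm D \<le> (\<Sum>k. (1 / (1 - p)) powr (Suc k / \<alpha>) * ((1 - p) ^ k * p))"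
proof
  define a where "a k = (1 / (1 - p)) powr (Suc k / \<alpha>)" for k
  define w where "w k = (1 - p) ^ k * p" for k
  have w: "w k \<ge> 0" for k
    using assms by (simp add: w_def)
  have "summable w"
    using assms unfolding w_def by (intro summable_mult2 summable_geometric) auto
  moreover have moment: "summable (\<lambda>k. \<bar>a k\<bar> * w k)"
    using summable_f_ap_moment[OF assms] by (simp add: a_def w_def)
  moreover have "f_ap \<alpha> p = (\<lambda>u. \<Sum>k. iexp (u * a k) * of_real (w k))"
    by (rule ext) (simp only: f_ap_def a_def w_def)
  ultimately show "(f_ap \<alpha> p has_vector_derivative
      (\<Sum>k. \<i> * of_real (a k) * iexp (u * a k) * of_real (w k))) (at u)"
    using has_vector_derivative_suminf_iexp[OF w] by simp
  have "norm (\<Sum>k. \<i> * of_real (a k) * iexp (u * a k) * of_real (w k))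
      \<le> (\<Sum>k. \<bar>a k\<bar> * w k)"
    using w moment by (intro norm_suminf_le) (auto simp: norm_mult)
  then show "norm (\<Sum>k. \<i> * of_real (a k) * iexp (u * a k) * of_real (w k))
      \<le> (\<Sum>k. (1 / (1 - p)) powr (Suc k / \<alpha>) * ((1 - p) ^ k * p))"
    by (simp add: a_def w_def)
qed

lemma norm_vector_derivative_x_ap_le:
  assumes \<alpha>: "1 < \<alpha>" and p: "0 < p" "p < 1" and n: "n \<ge> 1"
  shows "norm (vector_derivative (x_ap \<alpha> p n) (at t))
    \<le> (\<Sum>k. (1 / (1 - p)) powr (Suc k / \<alpha>) * ((1 - p) ^ k * p)) * real n powr ((\<alpha> - 1) / \<alpha>)"
proof -
  define c where "c = real n powr (1 / \<alpha>)"
  have c: "c > 0"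
    using n by (simp add: c_def)
  obtain D where D: "(f_ap \<alpha> p has_vector_derivative D) (at (t / c))"
    and D_le: "norm D \<le> (\<Sum>k. (1 / (1 - p)) powr (Suc k / \<alpha>) * ((1 - p) ^ k * p))"
    using f_ap_has_vector_derivative[OF \<alpha> p] .
  have "((\<lambda>t. t / c) has_vector_derivative 1 / c) (at t)"
    by (auto intro!: derivative_eq_intros)
  from vector_diff_chain_at[OF this D]
  have "((\<lambda>t. of_nat n * (f_ap \<alpha> p (t / c) - 1)) has_vector_derivative
      of_nat n * ((1 / c) *\<^sub>R D)) (at t)"
    by (auto intro!: derivative_eq_intros simp: o_def)
  then have "vector_derivative (x_ap \<alpha> p n) (at t) = of_nat n * ((1 / c) *\<^sub>R D)"
    by (intro vector_derivative_at) (simp add: x_ap_def[abs_def] c_def)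
  then have "norm (vector_derivative (x_ap \<alpha> p n) (at t)) = real n / c * norm D"
    using c by (simp add: norm_mult)
  also have "\<dots> \<le> real n / c * (\<Sum>k. (1 / (1 - p)) powr (Suc k / \<alpha>) * ((1 - p) ^ k * p))"
    using D_le c by (intro mult_left_mono) auto
  also have "real n / c = real n powr ((\<alpha> - 1) / \<alpha>)"
    using n \<alpha> by (simp add: c_def powr_diff diff_divide_distrib)
  finally show ?thesis
    by (simp add: mult.commute)
qed

theorem lemma11:
  shows "(\<forall>k \<alpha> p. k \<ge> 2 \<and> 1 < \<alpha> \<and> \<alpha> < 2 \<and> 0 < p \<and> p < 1 \<longrightarrow>
            (\<exists>C>0. \<forall>n t. n \<ge> 1 \<longrightarrow>
               norm (vector_derivative (R_ap \<alpha> p n k) (at t))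
                 \<le> C * \<bar>t\<bar> ^ (k - 1) / real n powr ((real k - \<alpha>) / \<alpha>)))
       \<and> (\<forall>\<alpha> p C2. 1 < \<alpha> \<and> \<alpha> < 2 \<and> 0 < p \<and> p < 1 \<and> C2 > 0 \<and>
            (\<forall>n t. n \<ge> 1 \<and> \<bar>t\<bar> \<le> C2 * real n powr (1 / \<alpha>) \<longrightarrow>
               norm (x_ap \<alpha> p n t) / real n \<le> 1 / 2) \<longrightarrow>
            (\<exists>C5>0. \<forall>n t. n \<ge> 1 \<and> \<bar>t\<bar> \<le> C2 * real n powr (1 / \<alpha>) \<longrightarrow>
               norm (vector_derivative (x_ap \<alpha> p n) (at t))
                 \<le> C5 * real n powr ((\<alpha> - 1) / \<alpha>)))"
proof (intro conjI allI impI)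
  fix k :: nat and \<alpha> p :: real
  assume "2 \<le> k \<and> 1 < \<alpha> \<and> \<alpha> < 2 \<and> 0 < p \<and> p < 1"
  then have p: "0 < p" "p < 1" and \<alpha>: "0 < \<alpha>" "\<alpha> < real k"
    by auto
  have "(1 / (1 - p)) powr (1 - k / \<alpha>) < 1"
    using p \<alpha> by (intro powr_less_one) (auto simp: field_simps)
  then have "p / ((1 - p) * (1 - (1 / (1 - p)) powr (1 - k / \<alpha>)) * fact (k - 1)) > 0"
    using p by simp
  with norm_vector_derivative_R_ap_le[OF p \<alpha>]
  show "\<exists>C>0. \<forall>n t. n \<ge> 1 \<longrightarrow>
      norm (vector_derivative (R_ap \<alpha> p n k) (at t)) \<le> C * \<bar>t\<bar> ^ (k - 1) / real n powr ((real k - \<alpha>) / \<alpha>)"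
    by blast
next
  fix \<alpha> p C2 :: real
  assume "1 < \<alpha> \<and> \<alpha> < 2 \<and> 0 < p \<and> p < 1 \<and> C2 > 0 \<and>
    (\<forall>n t. n \<ge> 1 \<and> \<bar>t\<bar> \<le> C2 * real n powr (1 / \<alpha>) \<longrightarrow> norm (x_ap \<alpha> p n t) / real n \<le> 1 / 2)"
  then have \<alpha>: "1 < \<alpha>" and p: "0 < p" "p < 1"
    by auto
  \<comment> \<open>The bound holds for all t.\<close>
  have "(\<Sum>k. (1 / (1 - p)) powr (Suc k / \<alpha>) * ((1 - p) ^ k * p)) > 0"
    using p by (intro suminf_pos summable_f_ap_moment[OF \<alpha> p]) auto
  with norm_vector_derivative_x_ap_le[OF \<alpha> p]
  show "\<exists>C5>0. \<forall>n t. n \<ge> 1 \<and> \<bar>t\<bar> \<le> C2 * real n powr (1 / \<alpha>) \<longrightarrow>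
      norm (vector_derivative (x_ap \<alpha> p n) (at t)) \<le> C5 * real n powr ((\<alpha> - 1) / \<alpha>)"
    by blast
qed

end
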